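(* Let $\mathcal{G}=(\mathcal{V},\mathcal{E})$ be a DAG with treatment $A$ and outcome $Y$ as in the context, and let $\mathcal{G}'=\mathcal{G}\setminus(A\to Y)$. Let $P\subseteq\mathcal{P}$ be a set of precision variables, $Z\subseteq\mathcal{V}\setminus\{A,Y\}$, and $U\subseteq\mathcal{W}$ a set of extended confounding variables such that $Z\cup P\cup U$ is a $(Z\cup P)$-irreducible adjustment set for estimating $\tau$. Then in $\mathcal{G}'$: (i) $A\perp_{\mathcal{G}'}Y\mid Z\cup P\cup U$; (ii) $A\perp_{\mathcal{G}'}Y\mid Z\cup U$; hence $Z\cup P\cup U$ and $Z\cup U$ are valid adjustment sets. In $\mathcal{G}$: (a) $P\perp_{\mathcal{G}}A\mid Z$; (b) $P\perp_{\mathcal{G}}U\mid A\cup Z$. Moreover, if $S$ is a suboptimal precision variable and $P^*$ is a precision variable such that $S\perp_{\mathcal{G}'}Y\mid P^*\cup Z$ for all $Z\subseteq\mathcal{V}\setminus\{A,Y\}$, then (c) $S\perp_{\mathcal{G}}Y\mid Z\cup P^*$.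
   Context: $\mathcal{G}=(\mathcal{V},\mathcal{E})$ is a DAG containing treatment $A$ and outcome $Y$ with an edge $A\to Y$; variables follow a linear Gaussian SEM Markov and faithful to $\mathcal{G}$; no variable of $\mathcal{V}\setminus\{A,Y\}$ is a descendant of $A$. $\perp_{\mathcal{H}}$ denotes d-separation in graph $\mathcal{H}$. $\tau=\frac{\partial}{\partial a}E\{Y\mid do(A=a)\}$. A set $Z\subseteq\mathcal{V}\setminus\{A,Y\}$ is a valid adjustment set if the OLS estimator of the $A$-coefficient when regressing $Y$ on $A$ and $Z$ is unbiased for $\tau$ for every distribution Markov to $\mathcal{G}$ (equivalently here, $A\perp_{\mathcal{G}'}Y\mid Z$). For $K\subseteq Z$, a valid set $Z$ is $K$-irreducible if no proper subset $Z'\subsetneq Z$ with $K\subseteq Z'$ is valid. Precision variables $\mathcal{P}$: $V\in\mathcal{V}\setminus\{A,Y\}$ d-separated from $A$ in $\mathcal{G}'$ given every $K\subseteq\mathcal{V}\setminus\{A,Y\}$, and d-connected to $Y$ in $\mathcal{G}'$ given some $L\subseteq\mathcal{V}\setminus\{A,Y\}$. Suboptimal precision variables: $P\in\mathcal{P}$ for which there is another $P^*\in\mathcal{P}$ with all paths from $P$ to $Y$ in $\mathcal{G}'$ blocked given $P^*\cup Z$ for any $Z\subseteq\mathcal{V}\setminus\{A,Y\}$. Extended confounding variables $\mathcal{W}$: $V\in\mathcal{V}\setminus\{A,Y\}$ d-connected in $\mathcal{G}'$ to $A$ given some $K\subseteq\mathcal{V}\setminus\{A,Y\}$ and to $Y$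 given some $L\subseteq\mathcal{V}\setminus\{A,Y\}$. *)

theory Defs
  imports Main
begin

text \<open>Directed graphs are given by a vertex set V and an edge relation E;
  (u, w) \<in> E means u \<rightarrow> w.\<close>

definition is_dag :: "'v set \<Rightarrow> ('v \<times> 'v) set \<Rightarrow> bool" where
  "is_dag V E \<longleftrightarrow> finite V \<and> E \<subseteq> V \<times> V \<and> acyclic E"

definition descendants :: "('v \<times> 'v) set \<Rightarrow> 'v \<Rightarrow> 'v set" where
  "descendants E v = {w. (v, w) \<in> E\<^sup>*}"

definition is_path :: "('v \<times> 'v) set \<Rightarrow> 'v list \<Rightarrow> bool" where
  "is_path E p \<longleftrightarrow> p \<noteq> [] \<and> distinct p \<and>
     (\<forall>i. Suc i < length p \<longrightarrow> (p ! i, p ! Suc i) \<in> E \<or> (p ! Suc i, p ! i) \<in> E)"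

definition is_collider :: "('v \<times> 'v) set \<Rightarrow> 'v list \<Rightarrow> nat \<Rightarrow> bool" where
  "is_collider E p i \<longleftrightarrow> (p ! (i - 1), p ! i) \<in> E \<and> (p ! Suc i, p ! i) \<in> E"

definition d_open :: "('v \<times> 'v) set \<Rightarrow> 'v set \<Rightarrow> 'v list \<Rightarrow> bool" where
  "d_open E Z p \<longleftrightarrow> (\<forall>i. 0 < i \<and> Suc i < length p \<longrightarrow>
      (is_collider E p i \<longrightarrow> descendants E (p ! i) \<inter> Z \<noteq> {}) \<and>
      (\<not> is_collider E p i \<longrightarrow> p ! i \<notin> Z))"

text \<open>d-separation of X and Y given Z (convention: vertices of X, Y lying in Z
  are dropped, i.e. X \<perp> Y | Z iff X - Z and Y - Z are d-separated given Z).\<close>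
definition dsep :: "('v \<times> 'v) set \<Rightarrow> 'v set \<Rightarrow> 'v set \<Rightarrow> 'v set \<Rightarrow> bool" where
  "dsep E X Y Z \<longleftrightarrow> \<not> (\<exists>p. is_path E p \<and> hd p \<in> X - Z \<and> last p \<in> Y - Z \<and> d_open E Z p)"

definition Gprime :: "('v \<times> 'v) set \<Rightarrow> 'v \<Rightarrow> 'v \<Rightarrow> ('v \<times> 'v) set" where
  "Gprime E A Y = E - {(A, Y)}"

text \<open>Valid adjustment set (graphical characterization given in the context).\<close>
definition valid_adj :: "'v set \<Rightarrow> ('v \<times> 'v) set \<Rightarrow> 'v \<Rightarrow> 'v \<Rightarrow> 'v set \<Rightarrow> bool" where
  "valid_adj V E A Y Z \<longleftrightarrow> Z \<subseteq> V - {A, Y} \<and> dsep (Gprime E A Y) {A} {Y} Z"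

definition irreducible_adj :: "'v set \<Rightarrow> ('v \<times> 'v) set \<Rightarrow> 'v \<Rightarrow> 'v \<Rightarrow> 'v set \<Rightarrow> 'v set \<Rightarrow> bool" where
  "irreducible_adj V E A Y K Z \<longleftrightarrow> valid_adj V E A Y Z \<and> K \<subseteq> Z \<and>
     (\<forall>Z'. Z' \<subset> Z \<and> K \<subseteq> Z' \<longrightarrow> \<not> valid_adj V E A Y Z')"

definition precision_vars :: "'v set \<Rightarrow> ('v \<times> 'v) set \<Rightarrow> 'v \<Rightarrow> 'v \<Rightarrow> 'v set" where
  "precision_vars V E A Y = {v \<in> V - {A, Y}.
      (\<forall>K. K \<subseteq> V - {A, Y} \<longrightarrow> dsep (Gprime E A Y) {v} {A} K) \<and>
      (\<exists>L. L \<subseteq> V - {A, Y} \<and> \<not> dsep (Gprime E A Y) {v} {Y} L)}"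

definition suboptimal_precision_vars :: "'v set \<Rightarrow> ('v \<times> 'v) set \<Rightarrow> 'v \<Rightarrow> 'v \<Rightarrow> 'v set" where
  "suboptimal_precision_vars V E A Y = {p \<in> precision_vars V E A Y.
      \<exists>q \<in> precision_vars V E A Y. q \<noteq> p \<and>
        (\<forall>Z. Z \<subseteq> V - {A, Y} \<longrightarrow> dsep (Gprime E A Y) {p} {Y} ({q} \<union> Z))}"

definition ext_confounding_vars :: "'v set \<Rightarrow> ('v \<times> 'v) set \<Rightarrow> 'v \<Rightarrow> 'v \<Rightarrow> 'v set" where
  "ext_confounding_vars V E A Y = {v \<in> V - {A, Y}.
      (\<exists>K. K \<subseteq> V - {A, Y} \<and> \<not> dsep (Gprime E A Y) {v} {A} K) \<and>
      (\<exists>L. L \<subseteq> V - {A, Y} \<and> \<not> dsep (Gprime E A Y) {v} {Y} L)}"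

end

theory Submission
  imports Defs
begin

text \<open>All arguments take place in the undirected skeleton of the graph with the
  outcome Y deleted. Since nothing but A and Y descends from A, the outcome Y is a
  sink, so a d-connecting path given a set avoiding Y never runs through Y and hence
  connects its end points in that skeleton. A precision variable, however, is not
  connected to A there: a simple path to A avoiding Y would be d-connecting given
  the set of its own colliders. Each claim is proved by turning a hypothetical
  d-connecting path into such a forbidden connection; of the irreducibility of
  Z \<union> P \<union> U only its validity is needed.\<close>

definition skeleton_minus :: "('v \<times> 'v) set \<Rightarrow> 'v \<Rightarrow> ('v \<times> 'v) set" where
  "skeleton_minus F Y = {(x, y). ((x, y) \<in> F \<or> (y, x) \<in> F) \<and> x \<noteq> Y \<and> y \<noteq> Y}"

definition inner_colliders :: "('v \<times> 'v) set \<Rightarrow> 'v list \<Rightarrow> 'v set" where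
  "inner_colliders F q = {q ! i | i. 0 < i \<and> Suc i < length q \<and> is_collider F q i}"

lemma sym_skeleton_minus: "sym (skeleton_minus F Y)"
  unfolding sym_def skeleton_minus_def by auto

lemma skeleton_minus_Gprime: "skeleton_minus (Gprime E A Y) Y = skeleton_minus E Y"
  unfolding skeleton_minus_def Gprime_def by auto

lemma is_path_Cons_Cons:
  "is_path F (x # y # q) \<longleftrightarrow>
     x \<notin> set (y # q) \<and> ((x, y) \<in> F \<or> (y, x) \<in> F) \<and> is_path F (y # q)"
  unfolding is_path_def by (auto simp: nth_Cons split: nat.splits)

lemma is_path_take: "is_path F q \<Longrightarrow> 0 < n \<Longrightarrow> is_path F (take n q)"
  unfolding is_path_def by auto

lemma is_path_drop: "is_path F q \<Longrightarrow> n < length q \<Longrightarrow> is_path F (drop n q)"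
  unfolding is_path_def by auto

lemma path_in_skeleton_minus:
  "is_path F q \<Longrightarrow> Y \<notin> set q \<Longrightarrow> (hd q, last q) \<in> (skeleton_minus F Y)\<^sup>*"
proof (induction q)
  case Nil
  then show ?case by (simp add: is_path_def)
next
  case (Cons x q)
  show ?case
  proof (cases q)
    case Nil
    then show ?thesis by simp
  next
    case (Cons y q')
    with Cons.prems have "(x, y) \<in> skeleton_minus F Y" "is_path F q"
      by (auto simp: is_path_Cons_Cons skeleton_minus_def)
    with Cons.IH Cons.prems \<open>q = y # q'\<close> show ?thesis
      by (auto intro: converse_rtrancl_into_rtrancl)
  qed
qed

lemma prefix_in_skeleton_minus:
  assumes q: "is_path F q" "last q = Y" and i: "i < length q - 1"
  shows "(hd q, q ! i) \<in> (skeleton_minus F Y)\<^sup>*"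
proof -
  have "q \<noteq> []" "distinct q" using q(1) by (auto simp: is_path_def)
  then have "Y \<notin> set (take (Suc i) q)"
    using q(2) i by (auto simp: last_conv_nth in_set_conv_nth nth_eq_iff_index_eq)
  moreover have "hd (take (Suc i) q) = hd q" by (cases q) simp_all
  moreover have "last (take (Suc i) q) = q ! i" using i by (simp add: take_Suc_conv_app_nth)
  ultimately show ?thesis
    using path_in_skeleton_minus[OF is_path_take[OF q(1)], of "Suc i" Y] by simp
qed

lemma skeleton_minus_path:
  assumes "(x, y) \<in> (skeleton_minus F Y)\<^sup>*" "x \<noteq> Y"
  shows "\<exists>q. is_path F q \<and> hd q = x \<and> last q = y \<and> Y \<notin> set q"
  using assms
proof (induction rule: converse_rtrancl_induct)
  case base
  then show ?case by (intro exI[of _ "[y]"]) (simp add: is_path_def)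
next
  case (step x x')
  then have edge: "(x, x') \<in> F \<or> (x', x) \<in> F" "x' \<noteq> Y"
    by (auto simp: skeleton_minus_def)
  then obtain q where q: "is_path F q" "hd q = x'" "last q = y" "Y \<notin> set q"
    using step.IH by blast
  show ?case
  proof (cases "x \<in> set q")
    case True
    then obtain i where "i < length q" "q ! i = x" by (auto simp: in_set_conv_nth)
    with q show ?thesis
      by (intro exI[of _ "drop i q"]) (auto simp: is_path_drop hd_drop_conv_nth dest: in_set_dropD)
  next
    case False
    from q(1) obtain q' where "q = x' # q'"
      using q(2) by (cases q) (auto simp: is_path_def)
    with q False edge step.prems show ?thesis
      by (intro exI[of _ "x # q"]) (auto simp: is_path_Cons_Cons)
  qed
qed

lemma inner_colliders_subset:
  assumes "is_path F q"
  shows "inner_colliders F q \<subseteq> Range F - {hd q, last q}"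
proof
  fix v assume "v \<in> inner_colliders F q"
  then obtain i where i: "v = q ! i" "0 < i" "Suc i < length q" "is_collider F q i"
    by (auto simp: inner_colliders_def)
  have "q \<noteq> []" "distinct q" using assms by (auto simp: is_path_def)
  with i have "v \<noteq> hd q" "v \<noteq> last q"
    by (auto simp: hd_conv_nth last_conv_nth nth_eq_iff_index_eq)
  moreover have "v \<in> Range F" using i(1,4) by (auto simp: is_collider_def)
  ultimately show "v \<in> Range F - {hd q, last q}" by blast
qed

lemma d_open_inner_colliders:
  assumes "is_path F q"
  shows "d_open F (inner_colliders F q) q"
proof -
  have "distinct q" using assms by (simp add: is_path_def)
  then have "q ! i \<notin> inner_colliders F q"
    if "\<not> is_collider F q i" "Suc i < length q" for i
    using that by (auto simp: inner_colliders_def nth_eq_iff_index_eq)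
  moreover have "q ! i \<in> descendants F (q ! i)" for i
    by (simp add: descendants_def)
  ultimately show ?thesis
    unfolding d_open_def inner_colliders_def by blast
qed

lemma descendants_sink: "\<forall>w. (Y, w) \<notin> F \<Longrightarrow> descendants F Y = {Y}"
  unfolding descendants_def by (auto elim: converse_rtranclE)

lemma d_open_avoids_sink:
  assumes sink: "\<forall>w. (Y, w) \<notin> F" and q: "is_path F q" "d_open F K q"
    and "Y \<notin> K" "hd q \<noteq> Y" "last q \<noteq> Y"
  shows "Y \<notin> set q"
proof
  assume "Y \<in> set q"
  then obtain i where i: "i < length q" "q ! i = Y" by (auto simp: in_set_conv_nth)
  moreover have "q \<noteq> []" using q(1) by (simp add: is_path_def)
  ultimately have "i \<noteq> 0" "i \<noteq> length q - 1"
    using assms(5,6) i(2) by (metis hd_conv_nth, metis last_conv_nth)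
  with i have inner: "0 < i" "Suc i < length q" by auto
  have adj: "\<forall>j. Suc j < length q \<longrightarrow> (q ! j, q ! Suc j) \<in> F \<or> (q ! Suc j, q ! j) \<in> F"
    using q(1) by (simp add: is_path_def)
  from adj[rule_format, of "i - 1"] adj[rule_format, of i] sink i inner have "is_collider F q i"
    by (auto simp: is_collider_def)
  with q(2) inner have "descendants F Y \<inter> K \<noteq> {}"
    using i(2) by (auto simp: d_open_def)
  with assms show False by (simp add: descendants_sink)
qed

lemma d_open_in_skeleton_minus:
  assumes "\<forall>w. (Y, w) \<notin> F" "is_path F q" "d_open F K q"
    and "Y \<notin> K" "hd q \<noteq> Y" "last q \<noteq> Y"
  shows "(hd q, last q) \<in> (skeleton_minus F Y)\<^sup>*"
  using path_in_skeleton_minus d_open_avoids_sink assms by metis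

lemma precision_var_skeleton_disconnected:
  assumes "E \<subseteq> V \<times> V" "p \<in> precision_vars V E A Y"
  shows "(p, A) \<notin> (skeleton_minus E Y)\<^sup>*"
proof
  let ?G = "Gprime E A Y"
  assume "(p, A) \<in> (skeleton_minus E Y)\<^sup>*"
  moreover have p: "p \<in> V - {A, Y}"
    and sep: "\<And>K. K \<subseteq> V - {A, Y} \<Longrightarrow> dsep ?G {p} {A} K"
    using assms(2) by (auto simp: precision_vars_def)
  ultimately obtain q where q: "is_path ?G q" "hd q = p" "last q = A" "Y \<notin> set q"
    using skeleton_minus_path[of p A ?G Y] by (auto simp: skeleton_minus_Gprime)
  have "inner_colliders ?G q \<subseteq> Range ?G - {p, A}"
    using inner_colliders_subset[OF q(1)] q(2,3) by simp
  moreover have "Range ?G \<subseteq> V" using assms(1) by (auto simp: Gprime_def)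
  moreover have "Y \<notin> inner_colliders ?G q"
    using q(4) by (auto simp: inner_colliders_def)
  ultimately have "inner_colliders ?G q \<subseteq> V - {A, Y}" by blast
  moreover have "hd q \<notin> inner_colliders ?G q" "last q \<notin> inner_colliders ?G q"
    using inner_colliders_subset[OF q(1)] by auto
  ultimately show False
    using sep q p d_open_inner_colliders[OF q(1)] unfolding dsep_def by blast
qed

lemma descendants_Gprime:
  assumes sink: "\<forall>w. (Y, w) \<notin> E" and "z \<in> descendants E v" "z \<noteq> Y"
  shows "z \<in> descendants (Gprime E A Y) v"
proof -
  have "(v, z) \<in> E\<^sup>*" using assms(2) by (simp add: descendants_def)
  then have "(v, z) \<in> (Gprime E A Y)\<^sup>*" using \<open>z \<noteq> Y\<close>
  proof (induction rule: rtrancl_induct)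
    case base
    then show ?case by simp
  next
    case (step w z)
    with sink have "w \<noteq> Y" by blast
    with step show ?case by (auto simp: Gprime_def intro: rtrancl_into_rtrancl)
  qed
  then show ?thesis by (simp add: descendants_def)
qed

lemma d_open_Gprime:
  assumes sink: "\<forall>w. (Y, w) \<notin> E" and q: "is_path E q" "d_open E K q"
    and "Y \<notin> K" "last q = Y" "A \<notin> set (butlast q)"
  shows "is_path (Gprime E A Y) q \<and> d_open (Gprime E A Y) K q"
proof -
  have "q \<noteq> []" "distinct q" using q(1) by (auto simp: is_path_def)
  then have inner: "q ! i \<noteq> Y" "q ! i \<noteq> A" if "Suc i < length q" for i
    using that assms(5,6)
    by (auto simp: last_conv_nth nth_eq_iff_index_eq nth_butlast in_set_conv_nth)
  have "is_path (Gprime E A Y) q"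
    using q(1) inner by (auto simp: is_path_def Gprime_def)
  moreover have "is_collider (Gprime E A Y) q i \<longleftrightarrow> is_collider E q i"
    if "Suc i < length q" for i
    using inner[OF that] by (auto simp: is_collider_def Gprime_def)
  moreover have "descendants E v \<inter> K \<subseteq> descendants (Gprime E A Y) v" for v
    using descendants_Gprime[OF sink] \<open>Y \<notin> K\<close> by blast
  ultimately show ?thesis
    using q(2) unfolding d_open_def by blast
qed

lemma dsep_drop_disconnected:
  assumes sep: "dsep G {A} {Y} (K \<union> W)" and "Y \<notin> W"
    and disconnected: "\<And>w. w \<in> W \<Longrightarrow> (w, A) \<notin> (skeleton_minus G Y)\<^sup>*"
  shows "dsep G {A} {Y} K"
  unfolding dsep_def
proof
  assume "\<exists>q. is_path G q \<and> hd q \<in> {A} - K \<and> last q \<in> {Y} - K \<and> d_open G K q"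
  then obtain q where q: "is_path G q" "hd q = A" "last q = Y" "A \<notin> K" "Y \<notin> K"
    "d_open G K q" by blast
  have "A \<notin> W" using disconnected by blast
  show False
  proof (cases "\<exists>i. 0 < i \<and> Suc i < length q \<and> \<not> is_collider G q i \<and> q ! i \<in> W")
    case True
    then obtain i where i: "Suc i < length q" "q ! i \<in> W" by blast
    have "(A, q ! i) \<in> (skeleton_minus G Y)\<^sup>*"
      using prefix_in_skeleton_minus[OF q(1,3)] i(1) q(2) by simp
    then have "(q ! i, A) \<in> (skeleton_minus G Y)\<^sup>*"
      using sym_skeleton_minus sym_rtrancl symD by metis
    with i(2) disconnected show False by blast
  next
    case False
    with q(6) have "d_open G (K \<union> W) q" by (auto simp: d_open_def)
    with q \<open>A \<notin> W\<close> \<open>Y \<notin> W\<close> sep show False by (auto simp: dsep_def)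
  qed
qed

lemma outcome_sink:
  assumes dag: "is_dag V E" and "(A, Y) \<in> E"
    and nodesc: "\<forall>v \<in> V - {A, Y}. v \<notin> descendants E A"
  shows "\<forall>w. (Y, w) \<notin> E"
proof (intro allI notI)
  fix w assume "(Y, w) \<in> E"
  moreover have "E \<subseteq> V \<times> V" "acyclic E" using dag by (auto simp: is_dag_def)
  ultimately have "w \<in> V" "(A, w) \<in> E\<^sup>+" "(Y, w) \<in> E\<^sup>+"
    using \<open>(A, Y) \<in> E\<close> by auto
  with nodesc \<open>acyclic E\<close> show False
    by (auto simp: descendants_def acyclic_def dest: trancl_into_rtrancl)
qed

lemma precision_vars_subset: "precision_vars V E A Y \<subseteq> V - {A, Y}"
  unfolding precision_vars_def by blast

lemma ext_confounding_vars_subset: "ext_confounding_vars V E A Y \<subseteq> V - {A, Y}"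
  unfolding ext_confounding_vars_def by blast

lemma precision_dsep_treatment:
  assumes "E \<subseteq> V \<times> V" "\<forall>w. (Y, w) \<notin> E" "P \<subseteq> precision_vars V E A Y"
    and "Y \<notin> Z" "A \<noteq> Y"
  shows "dsep E P {A} Z"
  unfolding dsep_def
proof
  assume "\<exists>q. is_path E q \<and> hd q \<in> P - Z \<and> last q \<in> {A} - Z \<and> d_open E Z q"
  then obtain q where q: "is_path E q" "hd q \<in> P" "last q = A" "d_open E Z q" by blast
  moreover have "hd q \<noteq> Y" using q(2) assms(3) precision_vars_subset[of V E A Y] by blast
  ultimately have "(hd q, A) \<in> (skeleton_minus E Y)\<^sup>*"
    using d_open_in_skeleton_minus[OF assms(2) q(1,4) assms(4)] assms(5) by simp
  moreover have "hd q \<in> precision_vars V E A Y" using q(2) assms(3) by blast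
  ultimately show False using precision_var_skeleton_disconnected[OF assms(1)] by blast
qed

lemma dsep_drop_precision_vars:
  assumes EV: "E \<subseteq> V \<times> V" and P: "P \<subseteq> precision_vars V E A Y"
    and sep: "dsep (Gprime E A Y) {A} {Y} (K \<union> P)"
  shows "dsep (Gprime E A Y) {A} {Y} K"
proof (rule dsep_drop_disconnected[OF sep])
  show "Y \<notin> P" using P precision_vars_subset[of V E A Y] by blast
  show "(p, A) \<notin> (skeleton_minus (Gprime E A Y) Y)\<^sup>*" if "p \<in> P" for p
    using precision_var_skeleton_disconnected[OF EV] P that
    by (auto simp: skeleton_minus_Gprime)
qed

lemma precision_dsep_ext_confounding:
  assumes EV: "E \<subseteq> V \<times> V" and sink: "\<forall>w. (Y, w) \<notin> E"
    and "P \<subseteq> precision_vars V E A Y" "U \<subseteq> ext_confounding_vars V E A Y"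
    and "Y \<notin> Z" "A \<noteq> Y"
  shows "dsep E P U ({A} \<union> Z)"
  unfolding dsep_def
proof
  let ?G = "Gprime E A Y"
  assume "\<exists>q. is_path E q \<and> hd q \<in> P - ({A} \<union> Z) \<and> last q \<in> U - ({A} \<union> Z)
    \<and> d_open E ({A} \<union> Z) q"
  then obtain q where q: "is_path E q" "hd q \<in> P" "last q \<in> U" "d_open E ({A} \<union> Z) q"
    by blast
  have "hd q \<noteq> Y" "last q \<noteq> Y"
    using q(2,3) assms(3,4) precision_vars_subset[of V E A Y]
      ext_confounding_vars_subset[of V E A Y] by blast+
  with assms(5,6) have conn_q: "(hd q, last q) \<in> (skeleton_minus E Y)\<^sup>*"
    using d_open_in_skeleton_minus[OF sink q(1,4)] by blast
  have "last q \<in> ext_confounding_vars V E A Y" using q(3) assms(4) by blast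
  then obtain K where K: "K \<subseteq> V - {A, Y}" "\<not> dsep ?G {last q} {A} K"
    unfolding ext_confounding_vars_def by blast
  from K(2) obtain r where r: "is_path ?G r" "hd r = last q" "last r = A" "d_open ?G K r"
    unfolding dsep_def by blast
  have "\<forall>w. (Y, w) \<notin> ?G" using sink by (simp add: Gprime_def)
  moreover have "Y \<notin> K" using K(1) by blast
  ultimately have "(last q, A) \<in> (skeleton_minus ?G Y)\<^sup>*"
    using d_open_in_skeleton_minus[of Y ?G r K] r \<open>last q \<noteq> Y\<close> \<open>A \<noteq> Y\<close> by simp
  with conn_q have "(hd q, A) \<in> (skeleton_minus E Y)\<^sup>*"
    by (simp add: skeleton_minus_Gprime)
  moreover have "hd q \<in> precision_vars V E A Y" using q(2) assms(3) by blast
  ultimately show False using precision_var_skeleton_disconnected[OF EV] by blast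
qed

lemma precision_dsep_outcome:
  assumes EV: "E \<subseteq> V \<times> V" and sink: "\<forall>w. (Y, w) \<notin> E"
    and S: "S \<in> precision_vars V E A Y" and "Y \<notin> K"
    and sep: "dsep (Gprime E A Y) {S} {Y} K"
  shows "dsep E {S} {Y} K"
  unfolding dsep_def
proof
  assume "\<exists>q. is_path E q \<and> hd q \<in> {S} - K \<and> last q \<in> {Y} - K \<and> d_open E K q"
  then obtain q where q: "is_path E q" "hd q = S" "last q = Y" "S \<notin> K" "d_open E K q"
    by blast
  show False
  proof (cases "A \<in> set (butlast q)")
    case True
    then obtain i where "i < length (butlast q)" "butlast q ! i = A"
      by (auto simp: in_set_conv_nth)
    then have i: "i < length q - 1" "q ! i = A" by (simp_all add: nth_butlast)
    have "(S, A) \<in> (skeleton_minus E Y)\<^sup>*"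
      using prefix_in_skeleton_minus[OF q(1,3) i(1)] i(2) q(2) by simp
    with precision_var_skeleton_disconnected[OF EV S] show False by blast
  next
    case False
    then have "is_path (Gprime E A Y) q \<and> d_open (Gprime E A Y) K q"
      using d_open_Gprime[OF sink q(1,5) \<open>Y \<notin> K\<close> q(3)] by blast
    with q sep \<open>Y \<notin> K\<close> show False unfolding dsep_def by blast
  qed
qed

theorem lemmaB4:
  fixes V :: "'v set" and E :: "('v \<times> 'v) set" and A Y :: 'v
    and P Z U :: "'v set"
  assumes dag: "is_dag V E"
    and AY: "A \<in> V" "Y \<in> V" "(A, Y) \<in> E"
    and nodesc: "\<forall>v \<in> V - {A, Y}. v \<notin> descendants E A"
    and P: "P \<subseteq> precision_vars V E A Y"
    and Z: "Z \<subseteq> V - {A, Y}"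
    and U: "U \<subseteq> ext_confounding_vars V E A Y"
    and irr: "irreducible_adj V E A Y (Z \<union> P) (Z \<union> P \<union> U)"
  shows "dsep (Gprime E A Y) {A} {Y} (Z \<union> P \<union> U)
       \<and> dsep (Gprime E A Y) {A} {Y} (Z \<union> U)
       \<and> valid_adj V E A Y (Z \<union> P \<union> U)
       \<and> valid_adj V E A Y (Z \<union> U)
       \<and> dsep E P {A} Z
       \<and> dsep E P U ({A} \<union> Z)
       \<and> (\<forall>S Pstar. S \<in> suboptimal_precision_vars V E A Y
              \<and> Pstar \<in> precision_vars V E A Y
              \<and> (\<forall>Z'. Z' \<subseteq> V - {A, Y} \<longrightarrow> dsep (Gprime E A Y) {S} {Y} ({Pstar} \<union> Z'))
            \<longrightarrow> dsep E {S} {Y} (Z \<union> {Pstar}))"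
proof -
  let ?G = "Gprime E A Y"
  have EV: "E \<subseteq> V \<times> V" using dag by (simp add: is_dag_def)
  have "A \<noteq> Y" using dag AY(3) by (auto simp: is_dag_def acyclic_def)
  have sink: "\<forall>w. (Y, w) \<notin> E" by (rule outcome_sink[OF dag AY(3) nodesc])
  have "Y \<notin> Z" using Z by blast
  have valid: "valid_adj V E A Y (Z \<union> P \<union> U)"
    using irr by (simp add: irreducible_adj_def)
  then have sep: "dsep ?G {A} {Y} (Z \<union> P \<union> U)" by (simp add: valid_adj_def)
  then have sep': "dsep ?G {A} {Y} (Z \<union> U)"
    using dsep_drop_precision_vars[OF EV P, of "Z \<union> U"] by (simp add: Un_ac)
  moreover have "valid_adj V E A Y (Z \<union> U)"
    using sep' Z U ext_confounding_vars_subset[of V E A Y] by (auto simp: valid_adj_def)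
  moreover have "dsep E P {A} Z"
    by (rule precision_dsep_treatment[OF EV sink P \<open>Y \<notin> Z\<close> \<open>A \<noteq> Y\<close>])
  moreover have "dsep E P U ({A} \<union> Z)"
    by (rule precision_dsep_ext_confounding[OF EV sink P U \<open>Y \<notin> Z\<close> \<open>A \<noteq> Y\<close>])
  moreover have "dsep E {S} {Y} (Z \<union> {Pstar})"
    if "S \<in> suboptimal_precision_vars V E A Y" "Pstar \<in> precision_vars V E A Y"
      "\<forall>Z'. Z' \<subseteq> V - {A, Y} \<longrightarrow> dsep ?G {S} {Y} ({Pstar} \<union> Z')" for S Pstar
  proof (rule precision_dsep_outcome[OF EV sink])
    show "S \<in> precision_vars V E A Y"
      using that(1) by (simp add: suboptimal_precision_vars_def)
    show "Y \<notin> Z \<union> {Pstar}" using \<open>Y \<notin> Z\<close> that(2) precision_vars_subset[of V E A Y] by blast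
    show "dsep ?G {S} {Y} (Z \<union> {Pstar})" using that(3) Z by (metis Un_commute)
  qed
  ultimately show ?thesis using sep valid by blast
qed

end
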